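(* There exists a function $f_*$ in the Schwartz space $\mathcal S(\overline{\mathbb{R}_+})$ such that (i) $f_*>0$ on $\mathbb{R}_+$ and $f_*(0)=1$; (ii) $\int_0^\infty\bigl(|f_*'(t)|^2+(t-\hat\alpha)^2|f_*(t)|^2\bigr)dt=\hat\alpha$; (iii) $\int_0^\infty(t-\hat\alpha)|f_*(t)|^2dt=0$, $\int_0^\infty(t-\hat\alpha)^2|f_*(t)|^2dt=\frac{\hat\alpha}{4}$, and $\int_0^\infty(t-\hat\alpha)^3|f_*(t)|^2dt=\frac16(1-2\hat\alpha^2)$; (iv) $\int_0^\infty f_*'(t)f_*(t)dt=-\frac12$ and $\int_0^\infty t|f_*'(t)|^2dt=\frac13+\frac{\hat\alpha^2}{12}$.
   Context: $\hat\alpha=\alpha/\sqrt2$, where $-\alpha$ is the unique negative zero of the parabolic cylinder function $D_{1/2}$ (the solution of $w''+(1-\tfrac{z^2}{4})w=0$ with $D_{1/2}(z)=e^{-z^2/4}z^{1/2}(1+O(z^{-2}))$ as $z\to+\infty$). Equivalently, $\hat\alpha=\inf\{\int_0^\infty(|f'|^2+(t-\xi)^2|f|^2)dt/|f(0)|^2:\ f(0)\neq0,\ \xi\in\mathbb{R}\}$. *)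

theory Defs
  imports "HOL-Analysis.Analysis"
begin

definition schwartz_halfline :: "(real \<Rightarrow> 'a::real_normed_vector) \<Rightarrow> bool" where
  "schwartz_halfline f \<longleftrightarrow>
     (\<exists>D :: nat \<Rightarrow> real \<Rightarrow> 'a.
        (\<forall>t\<ge>0. D 0 t = f t) \<and>
        (\<forall>k. \<forall>t\<ge>0. (D k has_vector_derivative D (Suc k) t) (at t within {0..})) \<and>
        (\<forall>k m. \<exists>C. \<forall>t\<ge>0. t ^ m * norm (D k t) \<le> C))"

definition hderiv :: "(real \<Rightarrow> 'a::real_normed_vector) \<Rightarrow> real \<Rightarrow> 'a" where
  "hderiv f t = vector_derivative f (at t within {0..})"

definition alpha_hat :: real where
  "alpha_hat = Inf {(LINT t:{0..}|lborel. (cmod (hderiv f t))\<^sup>2 + (t - \<xi>)\<^sup>2 * (cmod (f t))\<^sup>2)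
                     / (cmod (f 0))\<^sup>2
                   | (f :: real \<Rightarrow> complex) \<xi>. schwartz_halfline f \<and> f 0 \<noteq> 0}"

end

(* Let y be the even solution of y'' = x^2 y with y(0) = 1, a power series in x^4, and g the
   positive solution decaying at +infinity.  Its logarithmic derivative W = -g'/g is positive,
   solves the Riccati equation W' = W^2 - s^2, and attains its minimum a at the point -a.
   For f on [0, infinity) and any xi, completing the square with w(t) = W(t - xi) gives

     int |f'|^2 + (t - xi)^2 |f|^2 = int |f' + w f|^2 + W(-xi) |f(0)|^2 >= a |f(0)|^2,

   with equality for xi = a and f(t) = g(t - a) / g(-a), because then f' = -w f.  Hence
   alpha_hat = a and this f is the function f_*.  Its moments follow by integrating
   ((t - a)^k phi)' over [0, infinity) for phi = f^2, f f', f'^2, using f'' = (t - a)^2 f,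
   f(0) = 1 and f'(0) = -a. *)

theory Submission
  imports Defs "HOL-Probability.Sinc_Integral" "HOL-Real_Asymp.Real_Asymp"
    "HOL-Computational_Algebra.Polynomial"
begin

section \<open>Rapid decay on the half-line\<close>

definition rapidly_decreasing :: "(real \<Rightarrow> real) \<Rightarrow> bool" where
  "rapidly_decreasing \<phi> \<longleftrightarrow> (\<forall>m::nat. \<exists>C. \<forall>t\<ge>0. (1 + t) ^ m * \<bar>\<phi> t\<bar> \<le> C)"

definition polynomially_bounded :: "(real \<Rightarrow> real) \<Rightarrow> bool" where
  "polynomially_bounded \<psi> \<longleftrightarrow> (\<exists>A (n::nat). \<forall>t\<ge>0. \<bar>\<psi> t\<bar> \<le> A * (1 + t) ^ n)"

lemma polynomially_boundedI:
  "(\<And>t. t \<ge> 0 \<Longrightarrow> \<bar>\<psi> t\<bar> \<le> A * (1 + t) ^ n) \<Longrightarrow> polynomially_bounded \<psi>"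
  unfolding polynomially_bounded_def by blast

lemma polynomially_boundedE:
  assumes "polynomially_bounded \<psi>"
  obtains A n where "A \<ge> 0" "\<And>t. t \<ge> 0 \<Longrightarrow> \<bar>\<psi> t\<bar> \<le> A * (1 + t) ^ n"
proof -
  from assms obtain A n where "\<And>t. t \<ge> 0 \<Longrightarrow> \<bar>\<psi> t\<bar> \<le> A * (1 + t) ^ n"
    unfolding polynomially_bounded_def by blast
  moreover from this[of 0] have "A \<ge> 0" by simp
  ultimately show thesis using that by blast
qed

lemma polynomially_bounded_const [intro]: "polynomially_bounded (\<lambda>t. c)"
  by (rule polynomially_boundedI[of _ "\<bar>c\<bar>" 0]) simp

lemma polynomially_bounded_ident [intro]: "polynomially_bounded (\<lambda>t. t)"
  by (rule polynomially_boundedI[of _ 1 1]) simp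

lemma polynomially_bounded_add [intro]:
  assumes "polynomially_bounded \<phi>" "polynomially_bounded \<psi>"
  shows "polynomially_bounded (\<lambda>t. \<phi> t + \<psi> t)"
proof -
  obtain A n where A: "A \<ge> 0" "\<And>t. t \<ge> 0 \<Longrightarrow> \<bar>\<phi> t\<bar> \<le> A * (1 + t) ^ n"
    using polynomially_boundedE[OF assms(1)] by blast
  obtain B k where B: "B \<ge> 0" "\<And>t. t \<ge> 0 \<Longrightarrow> \<bar>\<psi> t\<bar> \<le> B * (1 + t) ^ k"
    using polynomially_boundedE[OF assms(2)] by blast
  show ?thesis
  proof (rule polynomially_boundedI[of _ "A + B" "n + k"])
    fix t :: real assume t: "t \<ge> 0"
    have "\<bar>\<phi> t + \<psi> t\<bar> \<le> A * (1 + t) ^ n + B * (1 + t) ^ k"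
      using A(2)[OF t] B(2)[OF t] by linarith
    also have "\<dots> \<le> A * (1 + t) ^ (n + k) + B * (1 + t) ^ (n + k)"
      using A B t by (intro add_mono mult_left_mono power_increasing) auto
    finally show "\<bar>\<phi> t + \<psi> t\<bar> \<le> (A + B) * (1 + t) ^ (n + k)"
      by (simp add: algebra_simps)
  qed
qed

lemma polynomially_bounded_mult [intro]:
  assumes "polynomially_bounded \<phi>" "polynomially_bounded \<psi>"
  shows "polynomially_bounded (\<lambda>t. \<phi> t * \<psi> t)"
proof -
  obtain A n where A: "A \<ge> 0" "\<And>t. t \<ge> 0 \<Longrightarrow> \<bar>\<phi> t\<bar> \<le> A * (1 + t) ^ n"
    using polynomially_boundedE[OF assms(1)] by blast
  obtain B k where B: "B \<ge> 0" "\<And>t. t \<ge> 0 \<Longrightarrow> \<bar>\<psi> t\<bar> \<le> B * (1 + t) ^ k"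
    using polynomially_boundedE[OF assms(2)] by blast
  show ?thesis
  proof (rule polynomially_boundedI[of _ "A * B" "n + k"])
    fix t :: real assume t: "t \<ge> 0"
    have "\<bar>\<phi> t * \<psi> t\<bar> \<le> (A * (1 + t) ^ n) * (B * (1 + t) ^ k)"
      unfolding abs_mult using A B t by (intro mult_mono) auto
    then show "\<bar>\<phi> t * \<psi> t\<bar> \<le> (A * B) * (1 + t) ^ (n + k)"
      by (simp add: algebra_simps power_add)
  qed
qed

lemma polynomially_bounded_minus [intro]:
  "polynomially_bounded \<phi> \<Longrightarrow> polynomially_bounded (\<lambda>t. - \<phi> t)"
  unfolding polynomially_bounded_def by simp

lemma polynomially_bounded_diff [intro]:
  "polynomially_bounded \<phi> \<Longrightarrow> polynomially_bounded \<psi> \<Longrightarrow> polynomially_bounded (\<lambda>t. \<phi> t - \<psi> t)"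
  using polynomially_bounded_add[of \<phi> "\<lambda>t. - \<psi> t"] by auto

lemma polynomially_bounded_power [intro]:
  "polynomially_bounded \<phi> \<Longrightarrow> polynomially_bounded (\<lambda>t. \<phi> t ^ k)"
  by (induction k) auto

lemma polynomially_bounded_poly [intro]: "polynomially_bounded (poly p)"
proof (induction p rule: pCons_induct)
  case (pCons a p)
  then have "polynomially_bounded (\<lambda>t. a + t * poly p t)"
    by (intro polynomially_bounded_add polynomially_bounded_mult) auto
  then show ?case by simp
qed auto

lemma polynomially_bounded_shift_power: "polynomially_bounded (\<lambda>t. (t - c) ^ n)"
  by (intro polynomially_bounded_power polynomially_bounded_diff polynomially_bounded_ident
        polynomially_bounded_const)

lemma rapidly_decreasingI:
  "(\<And>m. \<exists>C. \<forall>t\<ge>0. (1 + t) ^ m * \<bar>\<phi> t\<bar> \<le> C) \<Longrightarrow> rapidly_decreasing \<phi>"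
  unfolding rapidly_decreasing_def by blast

lemma rapidly_decreasing_imp_polynomially_bounded:
  assumes "rapidly_decreasing \<phi>"
  shows "polynomially_bounded \<phi>"
proof -
  obtain C where "\<forall>t\<ge>0. (1 + t) ^ 0 * \<bar>\<phi> t\<bar> \<le> C"
    using assms unfolding rapidly_decreasing_def by blast
  then show ?thesis by (intro polynomially_boundedI[of _ C 0]) auto
qed

lemma rapidly_decreasing_mult_polynomially_bounded [intro]:
  assumes "rapidly_decreasing \<phi>" "polynomially_bounded \<psi>"
  shows "rapidly_decreasing (\<lambda>t. \<psi> t * \<phi> t)"
proof (rule rapidly_decreasingI)
  fix m
  obtain A n where A: "A \<ge> 0" "\<And>t. t \<ge> 0 \<Longrightarrow> \<bar>\<psi> t\<bar> \<le> A * (1 + t) ^ n"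
    using polynomially_boundedE[OF assms(2)] by blast
  obtain C where C: "\<And>t. t \<ge> 0 \<Longrightarrow> (1 + t) ^ (m + n) * \<bar>\<phi> t\<bar> \<le> C"
    using assms(1) unfolding rapidly_decreasing_def by blast
  show "\<exists>C. \<forall>t\<ge>0. (1 + t) ^ m * \<bar>\<psi> t * \<phi> t\<bar> \<le> C"
  proof (intro exI allI impI)
    fix t :: real assume t: "t \<ge> 0"
    have "(1 + t) ^ m * \<bar>\<psi> t * \<phi> t\<bar> \<le> (1 + t) ^ m * (A * (1 + t) ^ n) * \<bar>\<phi> t\<bar>"
      unfolding abs_mult mult.assoc[symmetric] using A t by (intro mult_right_mono mult_left_mono) auto
    also have "\<dots> = A * ((1 + t) ^ (m + n) * \<bar>\<phi> t\<bar>)"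
      by (simp add: power_add algebra_simps)
    also have "\<dots> \<le> A * C"
      using A C t by (intro mult_left_mono) auto
    finally show "(1 + t) ^ m * \<bar>\<psi> t * \<phi> t\<bar> \<le> A * C" .
  qed
qed

lemma rapidly_decreasing_mult [intro]:
  "rapidly_decreasing \<phi> \<Longrightarrow> rapidly_decreasing \<psi> \<Longrightarrow> rapidly_decreasing (\<lambda>t. \<phi> t * \<psi> t)"
  using rapidly_decreasing_mult_polynomially_bounded[of \<psi> \<phi>]
    rapidly_decreasing_imp_polynomially_bounded[of \<phi>] by simp

lemma rapidly_decreasing_cmult [intro]:
  "rapidly_decreasing \<phi> \<Longrightarrow> rapidly_decreasing (\<lambda>t. c * \<phi> t)"
  using rapidly_decreasing_mult_polynomially_bounded[of \<phi> "\<lambda>t. c"] by blast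

lemma rapidly_decreasing_add [intro]:
  assumes "rapidly_decreasing \<phi>" "rapidly_decreasing \<psi>"
  shows "rapidly_decreasing (\<lambda>t. \<phi> t + \<psi> t)"
proof (rule rapidly_decreasingI)
  fix m
  obtain C D where C: "\<And>t. t \<ge> 0 \<Longrightarrow> (1 + t) ^ m * \<bar>\<phi> t\<bar> \<le> C"
    and D: "\<And>t. t \<ge> 0 \<Longrightarrow> (1 + t) ^ m * \<bar>\<psi> t\<bar> \<le> D"
    using assms unfolding rapidly_decreasing_def by meson
  show "\<exists>C. \<forall>t\<ge>0. (1 + t) ^ m * \<bar>\<phi> t + \<psi> t\<bar> \<le> C"
  proof (intro exI allI impI)
    fix t :: real assume t: "t \<ge> 0"
    have "(1 + t) ^ m * \<bar>\<phi> t + \<psi> t\<bar> \<le> (1 + t) ^ m * (\<bar>\<phi> t\<bar> + \<bar>\<psi> t\<bar>)"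
      using t by (intro mult_left_mono abs_triangle_ineq) auto
    also have "\<dots> \<le> C + D"
      using C[OF t] D[OF t] by (simp add: algebra_simps)
    finally show "(1 + t) ^ m * \<bar>\<phi> t + \<psi> t\<bar> \<le> C + D" .
  qed
qed

lemma rapidly_decreasing_diff [intro]:
  "rapidly_decreasing \<phi> \<Longrightarrow> rapidly_decreasing \<psi> \<Longrightarrow> rapidly_decreasing (\<lambda>t. \<phi> t - \<psi> t)"
  using rapidly_decreasing_add[of \<phi> "\<lambda>t. (-1) * \<psi> t"] rapidly_decreasing_cmult[of \<psi> "-1"]
  by simp

lemma rapidly_decreasing_of_norm_bound:
  fixes F :: "real \<Rightarrow> 'a::real_normed_vector"
  assumes decay: "\<And>m. \<exists>C. \<forall>t\<ge>0. t ^ m * norm (F t) \<le> C"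
    and le: "\<And>t. t \<ge> 0 \<Longrightarrow> \<bar>\<phi> t\<bar> \<le> norm (F t)"
  shows "rapidly_decreasing \<phi>"
proof (rule rapidly_decreasingI)
  fix m
  obtain C0 Cm where C0: "\<And>t. t \<ge> 0 \<Longrightarrow> t ^ 0 * norm (F t) \<le> C0"
    and Cm: "\<And>t. t \<ge> 0 \<Longrightarrow> t ^ m * norm (F t) \<le> Cm"
    using decay by meson
  show "\<exists>C. \<forall>t\<ge>0. (1 + t) ^ m * \<bar>\<phi> t\<bar> \<le> C"
  proof (intro exI allI impI)
    fix t :: real assume t: "t \<ge> 0"
    have "(1 + t) ^ m \<le> (2 * max 1 t) ^ m"
      using t by (intro power_mono) auto
    also have "\<dots> \<le> 2 ^ m * (1 + t ^ m)"
      using t by (simp add: power_mult_distrib max_def)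
    finally have "(1 + t) ^ m * \<bar>\<phi> t\<bar> \<le> 2 ^ m * (1 + t ^ m) * norm (F t)"
      using le[OF t] t by (intro mult_mono) auto
    also have "\<dots> = 2 ^ m * (t ^ 0 * norm (F t) + t ^ m * norm (F t))"
      by (simp add: algebra_simps)
    also have "\<dots> \<le> 2 ^ m * (C0 + Cm)"
      using C0[OF t] Cm[OF t] by (intro mult_left_mono add_mono) auto
    finally show "(1 + t) ^ m * \<bar>\<phi> t\<bar> \<le> 2 ^ m * (C0 + Cm)" .
  qed
qed

lemma rapidly_decreasing_tendsto_zero:
  assumes "rapidly_decreasing \<phi>"
  shows "(\<phi> \<longlongrightarrow> 0) at_top"
proof -
  obtain C where C: "\<And>t. t \<ge> 0 \<Longrightarrow> (1 + t) ^ 1 * \<bar>\<phi> t\<bar> \<le> C"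
    using assms unfolding rapidly_decreasing_def by blast
  show ?thesis
  proof (rule Lim_null_comparison)
    show "\<forall>\<^sub>F t in at_top. norm (\<phi> t) \<le> C / (1 + t)"
      using eventually_ge_at_top[of "0::real"]
      by eventually_elim (use C in \<open>auto simp: field_simps\<close>)
    show "((\<lambda>t. C / (1 + t)) \<longlongrightarrow> 0) at_top"
      by real_asymp
  qed
qed

lemma rapidly_decreasing_set_integrable:
  assumes "rapidly_decreasing \<phi>" and "continuous_on {0..} \<phi>"
  shows "set_integrable lborel {0..} \<phi>"
proof -
  obtain C where C: "\<And>t. t \<ge> 0 \<Longrightarrow> (1 + t) ^ 2 * \<bar>\<phi> t\<bar> \<le> C"
    using assms(1) unfolding rapidly_decreasing_def by blast
  have C0: "C \<ge> 0" using C[of 0] by simp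
  have bound: "\<bar>\<phi> t\<bar> \<le> C * inverse (1 + t\<^sup>2)" if t: "t \<ge> 0" for t
  proof -
    have "\<bar>\<phi> t\<bar> \<le> C / (1 + t) ^ 2"
      using C[OF t] t by (simp add: field_simps)
    also have "\<dots> \<le> C / (1 + t\<^sup>2)"
    proof (rule divide_left_mono)
      show "1 + t\<^sup>2 \<le> (1 + t) ^ 2"
        using t by (simp add: power2_eq_square algebra_simps)
      show "0 < (1 + t) ^ 2 * (1 + t\<^sup>2)"
        using t by (intro mult_pos_pos) (auto intro: add_pos_nonneg)
    qed (use C0 in auto)
    finally show ?thesis by (simp add: field_simps)
  qed
  show ?thesis
    unfolding set_integrable_def
  proof (rule Bochner_Integration.integrable_bound)
    show "integrable lborel (\<lambda>t. C * inverse (1 + t\<^sup>2))"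
      using integrable_inverse_1_plus_square by (simp add: set_integrable_def)
    show "(\<lambda>t. indicat_real {0..} t *\<^sub>R \<phi> t) \<in> borel_measurable lborel"
      using borel_measurable_continuous_on_indicator[OF _ assms(2)] by simp
    show "AE t in lborel. norm (indicat_real {0..} t *\<^sub>R \<phi> t) \<le> norm (C * inverse (1 + t\<^sup>2))"
      using bound C0 by (intro AE_I2) (simp add: indicator_def abs_mult)
  qed
qed

lemma set_integral_Ici_derivative:
  fixes F F' :: "real \<Rightarrow> real"
  assumes F: "\<And>t. t \<ge> 0 \<Longrightarrow> (F has_real_derivative F' t) (at t within {0..})"
    and cont: "continuous_on {0..} F'"
    and decay: "rapidly_decreasing F" "rapidly_decreasing F'"
  shows "(LINT t:{0..}|lborel. F' t) = - F 0"
proof -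
  have int: "set_integrable lborel {0..} F'"
    using decay(2) cont by (rule rapidly_decreasing_set_integrable)
  have int': "set_integrable lborel {0<..} F'"
    by (rule set_integrable_subset[OF int]) auto
  have "(LBINT t=ereal 0..\<infinity>. F' t) = 0 - F 0"
  proof (rule interval_integral_FTC_integrable)
    fix x assume "ereal 0 < ereal x" "ereal x < \<infinity>"
    then have x: "x \<in> {0<..}" by simp
    have "(F has_real_derivative F' x) (at x within {0<..})"
      using F[of x] x by (auto intro: DERIV_subset)
    then show "(F has_vector_derivative F' x) (at x)"
      using at_within_open[OF x] by (simp add: has_real_derivative_iff_has_vector_derivative)
    have "continuous_on {0<..} F'"
      using cont by (rule continuous_on_subset) auto
    then show "isCont F' x"
      using x by (simp add: continuous_on_eq_continuous_at)
  next
    have "continuous (at 0 within {0..}) F"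
      using F[of 0] by (intro DERIV_continuous) auto
    then have "(F \<longlongrightarrow> F 0) (at_right 0)"
      by (auto simp: continuous_within intro: tendsto_within_subset)
    then show "((F \<circ> real_of_ereal) \<longlongrightarrow> F 0) (at_right (ereal 0))"
      unfolding ereal_tendsto_simps1 .
    show "((F \<circ> real_of_ereal) \<longlongrightarrow> 0) (at_left \<infinity>)"
      unfolding ereal_tendsto_simps1 using decay(1) by (rule rapidly_decreasing_tendsto_zero)
  qed (use int' in auto)
  then have "(LINT t:{0<..}|lborel. F' t) = - F 0"
    by (subst (asm) interval_integral_to_infinity_eq) simp
  moreover have "(LINT t:{0..}|lborel. F' t) = (LINT t:{0<..}|lborel. F' t)"
    using int int' AE_lborel_singleton[of 0]
    by (intro set_integral_cong_set)
       (auto simp: set_integrable_def set_borel_measurable_def elim!: eventually_mono)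
  ultimately show ?thesis by simp
qed

section \<open>The equation y'' = x^2 y\<close>

lemma suminf_ge_term:
  fixes c :: "nat \<Rightarrow> real"
  assumes "summable (\<lambda>n. c n * z ^ n)" "\<And>n. c n \<ge> 0" "z \<ge> 0"
  shows "c k * z ^ k \<le> (\<Sum>n. c n * z ^ n)"
  using sum_le_suminf[OF assms(1), of "{k}"] assms(2,3) by simp

(* With this recursion Y(z) = sum c_n z^n solves 16 z Y'' + 12 Y' = Y, so that y(x) = Y(x^4)
   is the even solution of y'' = x^2 y with y(0) = 1. *)
fun Y_coeff :: "nat \<Rightarrow> real" where
  "Y_coeff 0 = 1"
| "Y_coeff (Suc k) = Y_coeff k / ((4 * real k + 4) * (4 * real k + 3))"

lemma Y_coeff_pos: "Y_coeff k > 0"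
  by (induction k) auto

lemma diffs_Y_coeff_pos: "diffs Y_coeff k > 0"
  using Y_coeff_pos[of "Suc k"] by (simp add: diffs_def del: Y_coeff.simps)

lemma summable_Y_coeff: "summable (\<lambda>n. Y_coeff n * z ^ n)"
proof (rule summable_ratio_test[where c = "1/2" and N = "nat \<lceil>\<bar>z\<bar>\<rceil>"])
  fix n assume "nat \<lceil>\<bar>z\<bar>\<rceil> \<le> n"
  moreover have "2 * real n \<le> (4 * real n + 4) * (4 * real n + 3)"
    by (simp add: algebra_simps)
  ultimately have "2 * \<bar>z\<bar> \<le> (4 * real n + 4) * (4 * real n + 3)"
    by linarith
  then have "\<bar>z\<bar> / ((4 * real n + 4) * (4 * real n + 3)) \<le> 1/2"
    by (simp add: divide_le_eq)
  then have "Y_coeff n * \<bar>z\<bar> ^ n * (\<bar>z\<bar> / ((4 * real n + 4) * (4 * real n + 3)))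
      \<le> Y_coeff n * \<bar>z\<bar> ^ n * (1/2)"
    using Y_coeff_pos[of n] by (intro mult_left_mono) auto
  then show "norm (Y_coeff (Suc n) * z ^ Suc n) \<le> 1/2 * norm (Y_coeff n * z ^ n)"
    using Y_coeff_pos[of n] by (simp add: abs_mult power_abs mult_ac)
qed simp

definition Y :: "real \<Rightarrow> real" where "Y z = (\<Sum>n. Y_coeff n * z ^ n)"
definition Y' :: "real \<Rightarrow> real" where "Y' z = (\<Sum>n. diffs Y_coeff n * z ^ n)"
definition Y'' :: "real \<Rightarrow> real" where "Y'' z = (\<Sum>n. diffs (diffs Y_coeff) n * z ^ n)"

lemma summable_Y': "summable (\<lambda>n. diffs Y_coeff n * z ^ n)"
  by (rule termdiff_converges_all) (use summable_Y_coeff in auto)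

lemma summable_Y'': "summable (\<lambda>n. diffs (diffs Y_coeff) n * z ^ n)"
  by (rule termdiff_converges_all) (use summable_Y' in auto)

lemma Y_has_derivative: "(Y has_real_derivative Y' z) (at z)"
  unfolding Y_def[abs_def] Y'_def
  using termdiffs_strong_converges_everywhere[OF summable_Y_coeff] by blast

lemma Y'_has_derivative: "(Y' has_real_derivative Y'' z) (at z)"
  unfolding Y'_def[abs_def] Y''_def
  using termdiffs_strong_converges_everywhere[OF summable_Y'] by blast

lemma Y_ode: "16 * z * Y'' z + 12 * Y' z = Y z"
proof -
  let ?f = "\<lambda>m. real m * (real m + 1) * Y_coeff (Suc m) * z ^ m"
  have "(\<lambda>n. z * (diffs (diffs Y_coeff) n * z ^ n)) sums (z * Y'' z)"
    unfolding Y''_def by (intro sums_mult summable_sums summable_Y'')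
  moreover have "(\<lambda>n. z * (diffs (diffs Y_coeff) n * z ^ n)) = (\<lambda>n. ?f (Suc n))"
    by (auto simp: diffs_def algebra_simps simp del: Y_coeff.simps)
  ultimately have "(\<lambda>n. ?f (Suc n)) sums (z * Y'' z)"
    by simp
  then have "?f sums (z * Y'' z)"
    using sums_Suc_iff[of ?f] by simp
  then have "(\<lambda>n. 16 * ?f n + 12 * (diffs Y_coeff n * z ^ n)) sums (16 * (z * Y'' z) + 12 * Y' z)"
    unfolding Y'_def by (intro sums_add sums_mult summable_sums summable_Y')
  moreover have "16 * ?f n + 12 * (diffs Y_coeff n * z ^ n) = Y_coeff n * z ^ n" for n
  proof -
    have "16 * ?f n + 12 * (diffs Y_coeff n * z ^ n)
        = Y_coeff (Suc n) * ((4 * real n + 4) * (4 * real n + 3)) * z ^ n"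
      unfolding diffs_def by (simp add: algebra_simps del: Y_coeff.simps)
    then show ?thesis by simp
  qed
  ultimately show ?thesis
    unfolding Y_def by (simp add: sums_iff mult.assoc)
qed

definition y :: "real \<Rightarrow> real" where "y x = Y (x ^ 4)"
definition y' :: "real \<Rightarrow> real" where "y' x = 4 * x ^ 3 * Y' (x ^ 4)"

lemma y_has_derivative: "(y has_real_derivative y' x) (at x)"
  using DERIV_chain2[OF Y_has_derivative DERIV_pow[of 4 x]]
  unfolding y_def[abs_def] y'_def by (simp add: algebra_simps)

lemma y'_has_derivative: "(y' has_real_derivative x\<^sup>2 * y x) (at x)"
proof -
  have "(y' has_real_derivative (12 * x\<^sup>2 * Y' (x ^ 4) + 4 * x ^ 3 * (Y'' (x ^ 4) * (4 * x ^ 3)))) (at x)"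
    unfolding y'_def[abs_def]
    by (auto intro!: derivative_eq_intros DERIV_chain2[OF Y'_has_derivative])
  also have "12 * x\<^sup>2 * Y' (x ^ 4) + 4 * x ^ 3 * (Y'' (x ^ 4) * (4 * x ^ 3))
      = x\<^sup>2 * (16 * x ^ 4 * Y'' (x ^ 4) + 12 * Y' (x ^ 4))"
    by (simp add: algebra_simps power2_eq_square power3_eq_cube power4_eq_xxxx)
  finally show ?thesis
    unfolding Y_ode y_def .
qed

lemma y_ge_monomial: "Y_coeff k * x ^ (4 * k) \<le> y x"
  using suminf_ge_term[OF summable_Y_coeff, of "x ^ 4" k] Y_coeff_pos[THEN less_imp_le]
  by (simp add: y_def Y_def power_mult)

lemma y_ge_1: "1 \<le> y x"
  using y_ge_monomial[of 0 x] by simp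

lemma y_pos: "0 < y x"
  using y_ge_1[of x] by simp

lemma y'_ge_monomial:
  assumes "x \<ge> 0"
  shows "4 * diffs Y_coeff k * x ^ (4 * k + 3) \<le> y' x"
proof -
  have "diffs Y_coeff k * (x ^ 4) ^ k \<le> Y' (x ^ 4)"
    unfolding Y'_def using diffs_Y_coeff_pos
    by (intro suminf_ge_term summable_Y') (auto intro: less_imp_le)
  then have "4 * x ^ 3 * (diffs Y_coeff k * (x ^ 4) ^ k) \<le> y' x"
    unfolding y'_def using assms by (intro mult_left_mono) auto
  then show ?thesis
    by (simp add: power_mult[symmetric] power_add algebra_simps)
qed

lemma y'_pos: assumes "x > 0" shows "y' x > 0"
proof -
  have "0 < 4 * diffs Y_coeff 0 * x ^ (4 * 0 + 3)"
    using assms diffs_Y_coeff_pos[of 0] by simp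
  also have "\<dots> \<le> y' x"
    using assms by (intro y'_ge_monomial) simp
  finally show ?thesis .
qed

lemma y'_mono: assumes "x \<le> z" shows "y' x \<le> y' z"
proof (rule DERIV_nonneg_imp_nondecreasing[OF assms])
  fix u show "\<exists>d. (y' has_real_derivative d) (at u) \<and> d \<ge> 0"
    using y'_has_derivative[of u] y_pos[of u] by (intro exI[of _ "u\<^sup>2 * y u"]) simp
qed

lemma y'_nonpos: "x \<le> 0 \<Longrightarrow> y' x \<le> 0"
  using y'_mono[of x 0] by (simp add: y'_def)

section \<open>The decaying solution g and its logarithmic derivative W\<close>

definition H :: "real \<Rightarrow> real" where "H x = (LBINT t=ereal 0..ereal x. 1 / (y t)\<^sup>2)"

lemma H_has_derivative: "(H has_real_derivative 1 / (y x)\<^sup>2) (at x)"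
proof -
  define a b where "a = - \<bar>x\<bar> - 1" and "b = \<bar>x\<bar> + 1"
  have "isCont (\<lambda>t. 1 / (y t)\<^sup>2) t" for t
    using y_has_derivative[THEN DERIV_isCont] y_pos[of t] by (intro continuous_intros) auto
  then have "continuous_on {a..b} (\<lambda>t. 1 / (y t)\<^sup>2)"
    by (intro continuous_at_imp_continuous_on) auto
  then have "(H has_vector_derivative 1 / (y x)\<^sup>2) (at x within {a..b})"
    unfolding H_def[abs_def] by (intro interval_integral_FTC2) (auto simp: a_def b_def)
  moreover have "at x within {a..b} = at x"
    by (rule at_within_Icc_at) (auto simp: a_def b_def)
  ultimately show ?thesis
    by (simp add: has_real_derivative_iff_has_vector_derivative)
qed

lemma H_strict_mono: assumes "x < z" shows "H x < H z"
proof (rule DERIV_pos_imp_increasing[OF assms])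
  fix u show "\<exists>d. (H has_real_derivative d) (at u) \<and> d > 0"
    using H_has_derivative[of u] y_pos[of u] by (intro exI[of _ "1 / (y u)\<^sup>2"]) simp
qed

(* As y' is nondecreasing, 1 / y(u)^2 <= y'(u) / (y'(x) y(u)^2) for u >= x, and the right-hand
   side is the derivative of - 1 / (y'(x) y(u)). *)
lemma H_le: assumes x: "0 < x" shows "H T \<le> H x + 1 / (y' x * y x)"
proof (cases "x \<le> T")
  case True
  let ?P = "\<lambda>u. H u + 1 / (y' x * y u)"
  have yx: "y' x > 0" using y'_pos x by simp
  have "?P T \<le> ?P x"
  proof (rule DERIV_nonpos_imp_nonincreasing[OF True])
    fix u assume u: "x \<le> u" "u \<le> T"
    have yu: "y u > 0" using y_pos by simp
    have "(?P has_real_derivative (1 / (y u)\<^sup>2 - y' x * y' u / (y' x * y u)\<^sup>2)) (at u)"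
      using yx yu
      by (auto intro!: derivative_eq_intros H_has_derivative y_has_derivative
               simp: field_simps power2_eq_square)
    moreover have "1 / (y u)\<^sup>2 = y' x * y' x / (y' x * y u)\<^sup>2"
      using yx yu by (simp add: power2_eq_square)
    moreover have "y' x * y' x / (y' x * y u)\<^sup>2 \<le> y' x * y' u / (y' x * y u)\<^sup>2"
      using yx y'_mono u by (intro divide_right_mono mult_left_mono) auto
    ultimately show "\<exists>d. (?P has_real_derivative d) (at u) \<and> d \<le> 0"
      by force
  qed
  moreover have "1 / (y' x * y T) \<ge> 0"
    using yx y_pos[of T] by simp
  ultimately show ?thesis by linarith
next
  case False
  then have "H T < H x" using H_strict_mono by simp
  moreover have "1 / (y' x * y x) \<ge> 0" using y'_pos[OF x] y_pos[of x] by simp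
  ultimately show ?thesis by linarith
qed

definition J :: "real \<Rightarrow> real" where "J x = (SUP t. H t) - H x"

lemma bdd_above_H: "bdd_above (range H)"
  using H_le[of 1] by (intro bdd_aboveI[of _ "H 1 + 1 / (y' 1 * y 1)"]) auto

lemma J_pos: "J x > 0"
  using H_strict_mono[of x "x + 1"] cSUP_upper[OF _ bdd_above_H, of "x + 1"]
  by (simp add: J_def)

lemma J_le: assumes "0 < x" shows "J x \<le> 1 / (y' x * y x)"
proof -
  have "(SUP t. H t) \<le> H x + 1 / (y' x * y x)"
    using H_le[OF assms] by (intro cSUP_least) auto
  then show ?thesis by (simp add: J_def)
qed

lemma J_has_derivative: "(J has_real_derivative - (1 / (y x)\<^sup>2)) (at x)"
  unfolding J_def[abs_def] by (auto intro!: derivative_eq_intros H_has_derivative)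

(* Reduction of order: g(x) = y(x) * integral from x to infinity of y^-2 is the solution of
   g'' = x^2 g that decays at +infinity. *)
definition g :: "real \<Rightarrow> real" where "g x = y x * J x"
definition g' :: "real \<Rightarrow> real" where "g' x = y' x * J x - 1 / y x"

lemma g_has_derivative: "(g has_real_derivative g' x) (at x)"
proof -
  have "(g has_real_derivative (y' x * J x + y x * - (1 / (y x)\<^sup>2))) (at x)"
    unfolding g_def[abs_def] by (auto intro!: derivative_eq_intros y_has_derivative J_has_derivative)
  then show ?thesis
    using y_pos[of x] by (simp add: g'_def power2_eq_square)
qed

lemma g'_has_derivative: "(g' has_real_derivative x\<^sup>2 * g x) (at x)"
proof -
  have "(g' has_real_derivative
          (x\<^sup>2 * y x * J x + y' x * - (1 / (y x)\<^sup>2) + y' x / (y x)\<^sup>2)) (at x)"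
    unfolding g'_def[abs_def] using y_pos[of x]
    by (auto intro!: derivative_eq_intros y_has_derivative J_has_derivative y'_has_derivative
             simp: power2_eq_square)
  then show ?thesis by (simp add: g_def mult.assoc)
qed

lemma g_pos: "g x > 0"
  using y_pos[of x] J_pos[of x] by (simp add: g_def)

lemma g_le: assumes "x > 0" shows "g x \<le> 1 / y' x"
proof -
  have "y x * J x \<le> y x * (1 / (y' x * y x))"
    using J_le[OF assms] y_pos[of x] by (intro mult_left_mono) auto
  then show ?thesis using y_pos[of x] by (simp add: g_def)
qed

lemma g'_nonpos_of_pos: assumes "x > 0" shows "g' x \<le> 0"
proof -
  have "y' x * J x \<le> y' x * (1 / (y' x * y x))"
    using J_le[OF assms] y'_pos[OF assms] by (intro mult_left_mono) auto
  then show ?thesis using y'_pos[OF assms] by (simp add: g'_def)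
qed

lemma g'_abs_le: assumes "x > 0" shows "\<bar>g' x\<bar> \<le> 1 / y x"
proof -
  have "0 \<le> y' x * J x"
    using y'_pos[OF assms] J_pos[of x] by simp
  then show ?thesis using g'_nonpos_of_pos[OF assms] by (simp add: g'_def)
qed

lemma g'_strict_mono_pos: assumes "0 < x" "x < z" shows "g' x < g' z"
proof (rule DERIV_pos_imp_increasing[OF assms(2)])
  fix u assume "x \<le> u"
  then show "\<exists>d. (g' has_real_derivative d) (at u) \<and> d > 0"
    using assms(1) g'_has_derivative[of u] g_pos[of u] by (intro exI[of _ "u\<^sup>2 * g u"]) simp
qed

lemma g'_neg: "g' x < 0"
proof (cases "x \<le> 0")
  case True
  then have "y' x * J x \<le> 0"
    using y'_nonpos J_pos[of x] by (simp add: mult_nonpos_nonneg)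
  moreover have "0 < 1 / y x"
    using y_pos[of x] by simp
  ultimately show ?thesis
    unfolding g'_def by linarith
next
  case False
  then show ?thesis
    using g'_strict_mono_pos[of x "x + 1"] g'_nonpos_of_pos[of "x + 1"] by simp
qed

lemma g_antimono: assumes "x \<le> z" shows "g z \<le> g x"
proof (rule DERIV_nonpos_imp_nonincreasing[OF assms])
  fix u show "\<exists>d. (g has_real_derivative d) (at u) \<and> d \<le> 0"
    using g_has_derivative[of u] g'_neg[of u] by (intro exI[of _ "g' u"]) simp
qed

lemma g'_mono: assumes "x \<le> z" shows "g' x \<le> g' z"
proof (rule DERIV_nonneg_imp_nondecreasing[OF assms])
  fix u show "\<exists>d. (g' has_real_derivative d) (at u) \<and> d \<ge> 0"
    using g'_has_derivative[of u] g_pos[of u] by (intro exI[of _ "u\<^sup>2 * g u"]) simp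
qed

definition W :: "real \<Rightarrow> real" where "W s = - g' s / g s"

lemma W_pos: "W s > 0"
  using g_pos[of s] g'_neg[of s] by (simp add: W_def divide_neg_pos)

lemma W_has_derivative: "(W has_real_derivative (W s)\<^sup>2 - s\<^sup>2) (at s)"
  unfolding W_def[abs_def] using g_pos[of s]
  by (auto intro!: derivative_eq_intros g_has_derivative g'_has_derivative
           simp: field_simps power2_eq_square)

lemma isCont_W: "isCont W s"
  using W_has_derivative DERIV_isCont by blast

lemma nonpos_by_crossing_derivative:
  fixes D D' :: "real \<Rightarrow> real"
  assumes Da: "D a \<le> 0" and ab: "a \<le> b"
    and deriv: "\<And>s. a \<le> s \<Longrightarrow> s \<le> b \<Longrightarrow> (D has_real_derivative D' s) (at s)"
    and crossing: "\<And>s. a \<le> s \<Longrightarrow> s < b \<Longrightarrow> D s = 0 \<Longrightarrow> D' s < 0"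
  shows "D b \<le> 0"
proof (rule ccontr)
  assume "\<not> D b \<le> 0"
  then have Db: "D b > 0" by simp
  have isc: "\<And>s. a \<le> s \<Longrightarrow> s \<le> b \<Longrightarrow> isCont D s"
    using deriv DERIV_isCont by blast
  define Z where "Z = {a..b} \<inter> D -` {..0}"
  have "closed Z"
    unfolding Z_def using isc
    by (intro continuous_closed_preimage continuous_at_imp_continuous_on) auto
  moreover have "a \<in> Z" "bdd_above Z"
    using ab Da by (auto simp: Z_def intro: bdd_aboveI[of _ b])
  ultimately have s0Z: "Sup Z \<in> Z" and s0_max: "\<And>z. z \<in> Z \<Longrightarrow> z \<le> Sup Z"
    using closed_contains_Sup cSup_upper by blast+
  define s0 where "s0 = Sup Z"
  have s0: "a \<le> s0" "s0 \<le> b" "D s0 \<le> 0"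
    using s0Z by (auto simp: Z_def s0_def)
  with Db have s0b: "s0 < b"
    by (cases "s0 = b") auto
  have D0: "D s0 = 0"
  proof (rule ccontr)
    assume "D s0 \<noteq> 0"
    with s0 have "D s0 < 0" by simp
    then obtain z where z: "s0 \<le> z" "z \<le> b" "D z = 0"
      using IVT[of D s0 0 b] Db s0b isc s0 by fastforce
    then have "z \<in> Z" "z \<noteq> s0"
      using s0 \<open>D s0 < 0\<close> by (auto simp: Z_def)
    then show False
      using s0_max[of z] z by (simp add: s0_def)
  qed
  then have "D' s0 < 0"
    using crossing s0 s0b by blast
  from DERIV_neg_dec_right[OF deriv[OF s0(1,2)] this]
  obtain d where d: "d > 0" "\<And>h. h > 0 \<Longrightarrow> h < d \<Longrightarrow> D (s0 + h) < D s0"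
    by blast
  define h where "h = min (d / 2) ((b - s0) / 2)"
  have h: "h > 0" "h < d" "s0 + h \<le> b"
    using d s0b by (auto simp: h_def min_def field_simps)
  then have "s0 + h \<in> Z"
    using d(2)[OF h(1,2)] D0 s0 by (auto simp: Z_def)
  then show False
    using s0_max h by (fastforce simp: s0_def)
qed

(* Otherwise W stays below the line through (s1, W 0) of slope -(2 W 0 + 1/2), along which the
   Riccati slope W^2 - s^2 is smaller, and the line is negative at -(W 0 + 1). *)
lemma W_gt_W0_far_left:
  assumes s1: "s1 \<le> -(W 0 + 2)"
  shows "W 0 < W s1"
proof (rule ccontr)
  define m where "m = W 0"
  define k where "k = 2 * m + 1/2"
  define b where "b = -(m + 1)"
  have m: "m > 0" using W_pos unfolding m_def by simp
  assume "\<not> W 0 < W s1"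
  then have "W s1 - (m - k * (s1 - s1)) \<le> 0" by (simp add: m_def)
  then have "W b - (m - k * (b - s1)) \<le> 0"
  proof (rule nonpos_by_crossing_derivative[where D = "\<lambda>s. W s - (m - k * (s - s1))"
                                            and D' = "\<lambda>s. (W s)\<^sup>2 - s\<^sup>2 + k"])
    show "s1 \<le> b" using s1 by (simp add: b_def m_def)
    show "((\<lambda>s. W s - (m - k * (s - s1))) has_real_derivative (W s)\<^sup>2 - s\<^sup>2 + k) (at s)" for s
      by (auto intro!: derivative_eq_intros W_has_derivative)
  next
    fix s assume s: "s1 \<le> s" "s < b" and crossing: "W s - (m - k * (s - s1)) = 0"
    have "k * (s - s1) \<ge> 0" using s m by (simp add: k_def)
    then have "(W s)\<^sup>2 \<le> m\<^sup>2"
      using crossing W_pos[of s] by (intro power_mono) auto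
    moreover have "(m + 1)\<^sup>2 \<le> (- s)\<^sup>2"
      using s m by (intro power_mono) (auto simp: b_def)
    ultimately show "(W s)\<^sup>2 - s\<^sup>2 + k < 0"
      by (simp add: k_def power2_eq_square algebra_simps)
  qed
  moreover have "k * (b - s1) \<ge> k * 1"
    using s1 m by (intro mult_left_mono) (auto simp: b_def k_def m_def)
  ultimately have "W b \<le> m - k"
    by linarith
  then have "W b < 0"
    using m by (simp add: k_def)
  then show False using W_pos[of b] by simp
qed

(* Otherwise W stays below the line w - (u - s), since where they meet W' = W^2 - u^2 is at most
   w^2 - s^2 < -1, the slope of the line; but the line becomes negative. *)
lemma W_gt_of_sq_lt:
  assumes s: "s \<ge> 0" and sq: "w\<^sup>2 + 1 < s\<^sup>2"
  shows "w < W s"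
proof (rule ccontr)
  define b where "b = s + w + 1"
  assume "\<not> w < W s"
  then have w: "W s \<le> w" by simp
  then have "W s - (w - (s - s)) \<le> 0" by simp
  then have "W b - (w - (b - s)) \<le> 0"
  proof (rule nonpos_by_crossing_derivative[where D = "\<lambda>u. W u - (w - (u - s))"
                                            and D' = "\<lambda>u. (W u)\<^sup>2 - u\<^sup>2 + 1"])
    show "s \<le> b" using w W_pos[of s] by (simp add: b_def)
    show "((\<lambda>u. W u - (w - (u - s))) has_real_derivative (W u)\<^sup>2 - u\<^sup>2 + 1) (at u)" for u
      by (auto intro!: derivative_eq_intros W_has_derivative)
  next
    fix u assume u: "s \<le> u" "u < b" and "W u - (w - (u - s)) = 0"
    then have "(W u)\<^sup>2 \<le> w\<^sup>2"
      using W_pos[of u] by (intro power_mono) auto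
    moreover have "s\<^sup>2 \<le> u\<^sup>2"
      using u s by (intro power_mono) auto
    ultimately show "(W u)\<^sup>2 - u\<^sup>2 + 1 < 0"
      using sq by linarith
  qed
  then have "W b \<le> -1" by (simp add: b_def)
  then show False using W_pos[of b] by simp
qed

(* Otherwise W stays below (s + s1)/2 up to s2 = 3 s1 + 3, contradicting W_gt_of_sq_lt there. *)
lemma W_gt_self:
  assumes s1: "s1 > 0"
  shows "s1 < W s1"
proof (rule ccontr)
  define s2 where "s2 = 3 * s1 + 3"
  assume "\<not> s1 < W s1"
  then have "W s1 - (s1 + s1) / 2 \<le> 0" by simp
  then have "W s2 - (s2 + s1) / 2 \<le> 0"
  proof (rule nonpos_by_crossing_derivative[where D = "\<lambda>s. W s - (s + s1) / 2"
                                            and D' = "\<lambda>s. (W s)\<^sup>2 - s\<^sup>2 - 1/2"])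
    show "s1 \<le> s2" using s1 by (simp add: s2_def)
    show "((\<lambda>s. W s - (s + s1) / 2) has_real_derivative (W s)\<^sup>2 - s\<^sup>2 - 1/2) (at s)" for s
      by (auto intro!: derivative_eq_intros W_has_derivative)
  next
    fix s assume s: "s1 \<le> s" "s < s2" and "W s - (s + s1) / 2 = 0"
    then have "(W s)\<^sup>2 \<le> s\<^sup>2"
      using W_pos[of s] by (intro power_mono) auto
    then show "(W s)\<^sup>2 - s\<^sup>2 - 1/2 < 0" by simp
  qed
  moreover have "(s2 + s1) / 2 < W s2"
  proof (rule W_gt_of_sq_lt)
    have "((s2 + s1) / 2)\<^sup>2 + 1 = 4 * s1\<^sup>2 + 6 * s1 + 13/4" and "s2\<^sup>2 = 9 * s1\<^sup>2 + 18 * s1 + 9"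
      by (simp_all add: s2_def power2_eq_square field_simps)
    then show "((s2 + s1) / 2)\<^sup>2 + 1 < s2\<^sup>2"
      using s1 zero_le_power2[of s1] by linarith
  qed (use s1 in \<open>simp add: s2_def\<close>)
  ultimately show False by simp
qed

(* Above the line 2 s, and for s >= 1, the Riccati slope W^2 - s^2 = 3 s^2 exceeds 2. *)
lemma W_ge_double_persists:
  assumes s1: "1 \<le> s1" "2 * s1 \<le> W s1" and s: "s1 \<le> s"
  shows "2 * s \<le> W s"
proof -
  have "2 * s1 - W s1 \<le> 0" using s1 by simp
  then have "2 * s - W s \<le> 0"
  proof (rule nonpos_by_crossing_derivative[where D = "\<lambda>u. 2 * u - W u"
                                            and D' = "\<lambda>u. 2 - ((W u)\<^sup>2 - u\<^sup>2)", OF _ s])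
    show "((\<lambda>u. 2 * u - W u) has_real_derivative 2 - ((W u)\<^sup>2 - u\<^sup>2)) (at u)" for u
      by (auto intro!: derivative_eq_intros W_has_derivative)
  next
    fix u assume u: "s1 \<le> u" "u < s" and "2 * u - W u = 0"
    then have "W u = 2 * u" by simp
    then have "(W u)\<^sup>2 - u\<^sup>2 = 3 * u\<^sup>2"
      by (simp add: power2_eq_square)
    moreover have "1 \<le> u\<^sup>2"
      using u s1 by (simp add: one_le_power)
    ultimately show "2 - ((W u)\<^sup>2 - u\<^sup>2) < 0" by linarith
  qed
  then show ?thesis by simp
qed

(* Otherwise W >= 2 s from s1 on, so (1/W)' = -(W^2 - s^2)/W^2 <= -3/4 and 1/W would become
   negative on [s1, s1 + 2]. *)
lemma W_le_double:
  assumes s1: "s1 \<ge> 1"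
  shows "W s1 \<le> 2 * s1"
proof (rule ccontr)
  assume "\<not> W s1 \<le> 2 * s1"
  then have Ws1: "2 * s1 < W s1" by simp
  let ?P = "\<lambda>s. 1 / W s + 3/4 * s"
  have "?P (s1 + 2) \<le> ?P s1"
  proof (rule DERIV_nonpos_imp_nonincreasing[where f = ?P])
    fix s assume s: "s1 \<le> s" "s \<le> s1 + 2"
    have Wp: "W s > 0" using W_pos by simp
    have "(2 * s)\<^sup>2 \<le> (W s)\<^sup>2"
      using W_ge_double_persists[OF s1 _ s(1)] Ws1 s s1 by (intro power_mono) auto
    then have "3/4 \<le> ((W s)\<^sup>2 - s\<^sup>2) / (W s)\<^sup>2"
      using Wp by (simp add: field_simps)
    moreover have "(?P has_real_derivative 3/4 - ((W s)\<^sup>2 - s\<^sup>2) / (W s)\<^sup>2) (at s)"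
      using Wp by (auto intro!: derivative_eq_intros W_has_derivative simp: power2_eq_square field_simps)
    ultimately show "\<exists>d. (?P has_real_derivative d) (at s) \<and> d \<le> 0"
      by (intro exI[of _ "3/4 - ((W s)\<^sup>2 - s\<^sup>2) / (W s)\<^sup>2"]) simp
  qed simp
  moreover have "1 / W s1 < 1/2"
    using Ws1 s1 by (simp add: field_simps)
  moreover have "3/4 * (s1 + 2) = 3/4 * s1 + 3/2"
    by simp
  ultimately have "1 / W (s1 + 2) < 0"
    by linarith
  then show False using W_pos[of "s1 + 2"] by simp
qed

(* By W_gt_W0_far_left and W_gt_self the minimum of W is attained on a compact interval;
   there W' = W^2 - s^2 vanishes, and W s > s excludes s >= 0. *)
lemma W_min_on_antidiagonal: "\<exists>a>0. W (-a) = a \<and> (\<forall>s. a \<le> W s)"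
proof -
  define m where "m = W 0"
  have m: "m > 0" using W_pos unfolding m_def by simp
  have "\<exists>s\<in>{-(m + 2)..m}. \<forall>z\<in>{-(m + 2)..m}. W s \<le> W z"
    using m isCont_W by (intro continuous_attains_inf continuous_at_imp_continuous_on) auto
  then obtain s where s: "\<And>z. z \<in> {-(m + 2)..m} \<Longrightarrow> W s \<le> W z"
    by blast
  have Ws: "W s \<le> m"
    using s[of 0] m by (simp add: m_def)
  have min: "W s \<le> W z" for z
  proof -
    consider "z \<in> {-(m + 2)..m}" | "z < -(m + 2)" | "z > m" by force
    then show ?thesis
    proof cases
      case 2 then show ?thesis using W_gt_W0_far_left[of z] Ws by (simp add: m_def)
    next
      case 3 then show ?thesis using W_gt_self[of z] Ws m by simp
    qed (rule s)
  qed
  have "(W s)\<^sup>2 - s\<^sup>2 = 0"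
    by (rule DERIV_local_min[OF W_has_derivative, of 1]) (use min in auto)
  then have "\<bar>W s\<bar> = \<bar>s\<bar>"
    using power2_eq_iff by fastforce
  moreover have "\<not> s \<ge> 0"
    using W_gt_self[of s] W_pos[of s] \<open>\<bar>W s\<bar> = \<bar>s\<bar>\<close> by auto
  ultimately show ?thesis
    using W_pos[of s] min by (intro exI[of _ "-s"]) auto
qed

definition a_star :: real where
  "a_star = (SOME a. a > 0 \<and> W (-a) = a \<and> (\<forall>s. a \<le> W s))"

lemma a_star: "a_star > 0" "W (- a_star) = a_star" "\<And>s. a_star \<le> W s"
  using someI_ex[OF W_min_on_antidiagonal] unfolding a_star_def by auto

lemma polynomially_bounded_W_shift: "polynomially_bounded (\<lambda>t. W (t - \<xi>))"
proof -
  have "\<exists>s0\<in>{-\<bar>\<xi>\<bar> - 1..1}. \<forall>z\<in>{-\<bar>\<xi>\<bar> - 1..1}. W z \<le> W s0"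
    using isCont_W by (intro continuous_attains_sup continuous_at_imp_continuous_on) auto
  then obtain s0 where s0: "\<And>z. z \<in> {-\<bar>\<xi>\<bar> - 1..1} \<Longrightarrow> W z \<le> W s0"
    by blast
  have "\<bar>W (t - \<xi>)\<bar> \<le> (W s0 + 2 * \<bar>\<xi>\<bar> + 2) * (1 + t) ^ 1" if t: "t \<ge> 0" for t
  proof -
    have "W (t - \<xi>) \<le> W s0 + 2 * \<bar>\<xi>\<bar> + 2 * t"
    proof (cases "t - \<xi> \<le> 1")
      case True
      then have "W (t - \<xi>) \<le> W s0"
        using s0[of "t - \<xi>"] t abs_ge_minus_self[of \<xi>] by simp
      then show ?thesis using t by simp
    next
      case False
      then show ?thesis using W_le_double[of "t - \<xi>"] W_pos[of s0] t by simp
    qed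
    also have "\<dots> \<le> (W s0 + 2 * \<bar>\<xi>\<bar> + 2) * (1 + t) ^ 1"
      using t W_pos[of s0] by (simp add: algebra_simps)
    finally show ?thesis using W_pos[of "t - \<xi>"] by simp
  qed
  then show ?thesis by (rule polynomially_boundedI)
qed

section \<open>The lower bound\<close>

lemma hderiv_eqI:
  assumes "t \<ge> 0" and "(f has_vector_derivative d) (at t within {0..})"
  shows "hderiv f t = d"
proof -
  have "at t within {t..} \<le> at t within {0..}"
    using assms(1) by (intro at_le) auto
  moreover have "at t within {t..} \<noteq> bot"
    using trivial_limit_at_right_real[of t] by (simp add: at_within_Ici_at_right)
  ultimately have "at t within {0..} \<noteq> bot"
    by (auto simp: bot_unique)
  then show ?thesis
    unfolding hderiv_def using assms(2) by (rule vector_derivative_within)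
qed

lemma set_integrable_energy:
  fixes \<phi> \<phi>' :: "real \<Rightarrow> real"
  assumes "continuous_on {0..} \<phi>" "continuous_on {0..} \<phi>'"
    and "rapidly_decreasing \<phi>" "rapidly_decreasing \<phi>'"
  shows "set_integrable lborel {0..} (\<lambda>t. (\<phi>' t)\<^sup>2 + (t - \<xi>)\<^sup>2 * (\<phi> t)\<^sup>2)"
proof (rule rapidly_decreasing_set_integrable)
  have r: "rapidly_decreasing (\<lambda>t. (t - \<xi>)\<^sup>2 * (\<phi> t * \<phi> t))"
    using assms(3)
    by (intro rapidly_decreasing_mult_polynomially_bounded[OF rapidly_decreasing_mult]
          polynomially_bounded_shift_power)
  show "rapidly_decreasing (\<lambda>t. (\<phi>' t)\<^sup>2 + (t - \<xi>)\<^sup>2 * (\<phi> t)\<^sup>2)"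
    using rapidly_decreasing_add[OF rapidly_decreasing_mult[OF assms(4,4)] r]
    by (simp add: power2_eq_square)
  show "continuous_on {0..} (\<lambda>t. (\<phi>' t)\<^sup>2 + (t - \<xi>)\<^sup>2 * (\<phi> t)\<^sup>2)"
    using assms(1,2) by (intro continuous_intros)
qed

lemma W_shift_has_derivative:
  "((\<lambda>t. W (t - \<xi>)) has_real_derivative (W (t - \<xi>))\<^sup>2 - (t - \<xi>)\<^sup>2) (at t)"
proof -
  have "((\<lambda>t. W (t - \<xi>)) has_real_derivative ((W (t - \<xi>))\<^sup>2 - (t - \<xi>)\<^sup>2) * 1) (at t)"
    by (rule DERIV_chain2[OF W_has_derivative]) (auto intro!: derivative_eq_intros)
  then show ?thesis by simp
qed

lemma energy_eq_completed_square:
  fixes \<phi> \<phi>' :: "real \<Rightarrow> real"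
  assumes deriv: "\<And>t. t \<ge> 0 \<Longrightarrow> (\<phi> has_real_derivative \<phi>' t) (at t within {0..})"
    and cont': "continuous_on {0..} \<phi>'"
    and decay: "rapidly_decreasing \<phi>" "rapidly_decreasing \<phi>'"
  shows "(LINT t:{0..}|lborel. (\<phi>' t)\<^sup>2 + (t - \<xi>)\<^sup>2 * (\<phi> t)\<^sup>2)
           = (LINT t:{0..}|lborel. (\<phi>' t + W (t - \<xi>) * \<phi> t)\<^sup>2) + W (-\<xi>) * (\<phi> 0)\<^sup>2"
proof -
  define w where "w t = W (t - \<xi>)" for t
  define R where "R t = (\<phi>' t + w t * \<phi> t)\<^sup>2" for t
  define G where "G t = - w t * (\<phi> t)\<^sup>2" for t
  define G' where "G' t = - ((w t)\<^sup>2 - (t - \<xi>)\<^sup>2) * (\<phi> t * \<phi> t) - 2 * w t * (\<phi> t * \<phi>' t)" for t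
  have dw: "(w has_real_derivative (w t)\<^sup>2 - (t - \<xi>)\<^sup>2) (at t)" for t
    unfolding w_def[abs_def] by (rule W_shift_has_derivative)
  have pw: "polynomially_bounded w" "polynomially_bounded (\<lambda>t. (w t)\<^sup>2 - (t - \<xi>)\<^sup>2)"
    unfolding w_def
    by (intro polynomially_bounded_diff polynomially_bounded_power polynomially_bounded_W_shift
          polynomially_bounded_ident polynomially_bounded_const)+
  have cont: "continuous_on {0..} \<phi>" "continuous_on {0..} w"
    using deriv dw[THEN DERIV_isCont]
    by (auto simp: continuous_on_eq_continuous_within
             intro: DERIV_continuous continuous_at_imp_continuous_within)
  have rR: "rapidly_decreasing R"
  proof -
    have "rapidly_decreasing (\<lambda>t. \<phi>' t + w t * \<phi> t)"
      using rapidly_decreasing_add[OF decay(2) rapidly_decreasing_mult_polynomially_bounded[OF decay(1) pw(1)]] .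
    from rapidly_decreasing_mult[OF this this] show ?thesis
      unfolding R_def[abs_def] power2_eq_square .
  qed
  have rG: "rapidly_decreasing G"
    using rapidly_decreasing_mult_polynomially_bounded[OF rapidly_decreasing_mult[OF decay(1,1)]
        polynomially_bounded_minus[OF pw(1)]]
    by (simp add: G_def[abs_def] power2_eq_square)
  have rG': "rapidly_decreasing G'"
    unfolding G'_def using decay pw
    by (intro rapidly_decreasing_diff rapidly_decreasing_mult_polynomially_bounded
          rapidly_decreasing_mult polynomially_bounded_minus polynomially_bounded_mult) auto
  have cG': "continuous_on {0..} G'" and cR: "continuous_on {0..} R"
    unfolding G'_def R_def using cont cont' by (auto intro!: continuous_intros)
  have dG: "(G has_real_derivative G' t) (at t within {0..})" if "t \<ge> 0" for t
    unfolding G_def[abs_def] G'_def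
    by (auto intro!: derivative_eq_intros deriv[OF that] has_field_derivative_at_within[OF dw]
             simp: algebra_simps power2_eq_square)
  have "(LINT t:{0..}|lborel. (\<phi>' t)\<^sup>2 + (t - \<xi>)\<^sup>2 * (\<phi> t)\<^sup>2) = (LINT t:{0..}|lborel. R t + G' t)"
    by (rule set_lebesgue_integral_cong) (auto simp: R_def G'_def power2_eq_square algebra_simps)
  also have "\<dots> = (LINT t:{0..}|lborel. R t) + W (-\<xi>) * (\<phi> 0)\<^sup>2"
    using set_integral_Ici_derivative[OF dG cG' rG rG']
      rapidly_decreasing_set_integrable[OF rR cR] rapidly_decreasing_set_integrable[OF rG' cG']
    by (simp add: G_def w_def)
  finally show ?thesis
    by (simp add: R_def w_def)
qed

lemma energy_ge_W_real:
  fixes \<phi> \<phi>' :: "real \<Rightarrow> real"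
  assumes "\<And>t. t \<ge> 0 \<Longrightarrow> (\<phi> has_real_derivative \<phi>' t) (at t within {0..})"
    and "continuous_on {0..} \<phi>'"
    and "rapidly_decreasing \<phi>" "rapidly_decreasing \<phi>'"
  shows "W (-\<xi>) * (\<phi> 0)\<^sup>2 \<le> (LINT t:{0..}|lborel. (\<phi>' t)\<^sup>2 + (t - \<xi>)\<^sup>2 * (\<phi> t)\<^sup>2)"
proof -
  have "0 \<le> (LINT t:{0..}|lborel. (\<phi>' t + W (t - \<xi>) * \<phi> t)\<^sup>2)"
    unfolding set_lebesgue_integral_def
    by (rule Bochner_Integration.integral_nonneg) (simp add: indicator_def)
  then show ?thesis
    using energy_eq_completed_square[OF assms, of \<xi>] by simp
qed

lemma schwartz_halfline_linear_image:
  fixes f :: "real \<Rightarrow> 'a::real_normed_vector" and L :: "'a \<Rightarrow> real"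
  assumes "schwartz_halfline f" and L: "bounded_linear L" "\<And>z. \<bar>L z\<bar> \<le> norm z"
  shows "\<And>t. t \<ge> 0 \<Longrightarrow> ((\<lambda>t. L (f t)) has_real_derivative L (hderiv f t)) (at t within {0..})"
    and "continuous_on {0..} (\<lambda>t. L (hderiv f t))"
    and "rapidly_decreasing (\<lambda>t. L (f t))" "rapidly_decreasing (\<lambda>t. L (hderiv f t))"
proof -
  obtain D :: "nat \<Rightarrow> real \<Rightarrow> 'a"
    where D0: "\<And>t. t \<ge> 0 \<Longrightarrow> D 0 t = f t"
      and dD: "\<And>k t. t \<ge> 0 \<Longrightarrow> (D k has_vector_derivative D (Suc k) t) (at t within {0..})"
      and decay: "\<And>k m. \<exists>C. \<forall>t\<ge>0. t ^ m * norm (D k t) \<le> C"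
    using assms(1) unfolding schwartz_halfline_def by blast
  have hderiv_f: "hderiv f t = D 1 t" if "t \<ge> 0" for t
  proof -
    have "(f has_vector_derivative D (Suc 0) t) (at t within {0..})"
      by (rule has_vector_derivative_transform[OF _ _ dD[OF that, of 0]]) (use that D0 in auto)
    then show ?thesis using hderiv_eqI[OF that] by simp
  qed
  show "((\<lambda>t. L (f t)) has_real_derivative L (hderiv f t)) (at t within {0..})" if "t \<ge> 0" for t
  proof -
    have "((\<lambda>t. L (D 0 t)) has_real_derivative L (hderiv f t)) (at t within {0..})"
      using bounded_linear.has_vector_derivative[OF L(1) dD[OF that, of 0]] that
      by (simp add: has_real_derivative_iff_has_vector_derivative hderiv_f)
    then show ?thesis
      by (rule has_field_derivative_transform_within[where d = 1]) (use that D0 in auto)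
  qed
  have "continuous_on {0..} (D 1)"
    using dD[THEN has_vector_derivative_continuous] by (auto simp: continuous_on_eq_continuous_within)
  from bounded_linear.continuous_on[OF L(1) this] show "continuous_on {0..} (\<lambda>t. L (hderiv f t))"
    by (rule continuous_on_cong[THEN iffD1, rotated 2]) (auto simp: hderiv_f)
  show "rapidly_decreasing (\<lambda>t. L (f t))"
    by (rule rapidly_decreasing_of_norm_bound[OF decay[where k = 0]]) (metis D0 L(2))
  show "rapidly_decreasing (\<lambda>t. L (hderiv f t))"
    by (rule rapidly_decreasing_of_norm_bound[OF decay[where k = 1]]) (metis hderiv_f L(2))
qed

lemma energy_ge_W:
  fixes f :: "real \<Rightarrow> complex"
  assumes "schwartz_halfline f"
  shows "W (-\<xi>) * (cmod (f 0))\<^sup>2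
           \<le> (LINT t:{0..}|lborel. (cmod (hderiv f t))\<^sup>2 + (t - \<xi>)\<^sup>2 * (cmod (f t))\<^sup>2)"
proof -
  note Re = schwartz_halfline_linear_image[OF assms bounded_linear_Re abs_Re_le_cmod]
  note Im = schwartz_halfline_linear_image[OF assms bounded_linear_Im abs_Im_le_cmod]
  have cont: "continuous_on {0..} (\<lambda>t. Re (f t))" "continuous_on {0..} (\<lambda>t. Im (f t))"
    using Re(1) Im(1)
    by (auto simp: continuous_on_eq_continuous_within intro: DERIV_continuous)
  have "W (-\<xi>) * (cmod (f 0))\<^sup>2 = W (-\<xi>) * (Re (f 0))\<^sup>2 + W (-\<xi>) * (Im (f 0))\<^sup>2"
    by (simp add: cmod_power2 algebra_simps)
  also have "\<dots> \<le> (LINT t:{0..}|lborel. (Re (hderiv f t))\<^sup>2 + (t - \<xi>)\<^sup>2 * (Re (f t))\<^sup>2)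
                 + (LINT t:{0..}|lborel. (Im (hderiv f t))\<^sup>2 + (t - \<xi>)\<^sup>2 * (Im (f t))\<^sup>2)"
    using Re Im by (intro add_mono energy_ge_W_real)
  also have "\<dots> = (LINT t:{0..}|lborel. (cmod (hderiv f t))\<^sup>2 + (t - \<xi>)\<^sup>2 * (cmod (f t))\<^sup>2)"
    using set_integral_add(2)[OF set_integrable_energy[OF cont(1) Re(2-4)]
        set_integrable_energy[OF cont(2) Im(2-4)], of \<xi> \<xi>]
    by (simp add: cmod_power2 algebra_simps)
  finally show ?thesis .
qed

section \<open>The minimiser\<close>

lemma rapidly_decreasing_shift:
  fixes G :: "real \<Rightarrow> real"
  assumes a: "a \<ge> 0"
    and decay: "\<And>m. \<exists>K. \<forall>x\<ge>1. x ^ m * \<bar>G x\<bar> \<le> K"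
    and bounded: "\<And>x. x \<ge> -a \<Longrightarrow> \<bar>G x\<bar> \<le> B"
  shows "rapidly_decreasing (\<lambda>t. G (t - a))"
proof (rule rapidly_decreasingI)
  fix m
  obtain K where K: "\<And>x. x \<ge> 1 \<Longrightarrow> x ^ m * \<bar>G x\<bar> \<le> K"
    using decay[of m] by blast
  have K0: "K \<ge> 0" and B0: "B \<ge> 0"
    using K[of 1] bounded[of "-a"] by auto
  have "(1 + t) ^ m * \<bar>G (t - a)\<bar> \<le> (2 + a) ^ m * (K + B)" if t: "t \<ge> 0" for t
  proof (cases "t - a \<ge> 1")
    case True
    have "1 + t \<le> (2 + a) * (t - a)"
      using True a mult_right_mono[of 1 "t - a" "1 + a"] by (simp add: algebra_simps)
    then have "(1 + t) ^ m * \<bar>G (t - a)\<bar> \<le> (2 + a) ^ m * ((t - a) ^ m * \<bar>G (t - a)\<bar>)"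
      using t by (simp add: power_mono mult_right_mono flip: power_mult_distrib mult.assoc)
    also have "\<dots> \<le> (2 + a) ^ m * (K + B)"
      using K[OF True] a B0 by (intro mult_left_mono) auto
    finally show ?thesis .
  next
    case False
    then have "(1 + t) ^ m * \<bar>G (t - a)\<bar> \<le> (2 + a) ^ m * B"
      using t a bounded[of "t - a"] by (intro mult_mono power_mono) auto
    also have "\<dots> \<le> (2 + a) ^ m * (K + B)"
      using K0 a by (intro mult_left_mono) auto
    finally show ?thesis .
  qed
  then show "\<exists>C. \<forall>t\<ge>0. (1 + t) ^ m * \<bar>G (t - a)\<bar> \<le> C"
    by blast
qed

lemma g_decay: "\<exists>K. \<forall>x\<ge>1. x ^ m * \<bar>g x\<bar> \<le> K"
proof (intro exI allI impI)
  fix x :: real assume x: "x \<ge> 1"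
  have "x ^ m * \<bar>g x\<bar> \<le> x ^ (4 * m + 3) * (1 / y' x)"
    using x g_le[of x] g_pos[of x] y'_pos[of x]
    by (intro mult_mono power_increasing) auto
  also have "\<dots> \<le> x ^ (4 * m + 3) * (1 / (4 * diffs Y_coeff m * x ^ (4 * m + 3)))"
    using x y'_ge_monomial[of x m] diffs_Y_coeff_pos[of m] y'_pos[of x]
    by (intro mult_left_mono divide_left_mono mult_pos_pos) auto
  also have "\<dots> = 1 / (4 * diffs Y_coeff m)"
    using x by simp
  finally show "x ^ m * \<bar>g x\<bar> \<le> 1 / (4 * diffs Y_coeff m)" .
qed

lemma g'_decay: "\<exists>K. \<forall>x\<ge>1. x ^ m * \<bar>g' x\<bar> \<le> K"
proof (intro exI allI impI)
  fix x :: real assume x: "x \<ge> 1"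
  have "x ^ m * \<bar>g' x\<bar> \<le> x ^ (4 * m) * (1 / y x)"
    using x g'_abs_le[of x] y_pos[of x]
    by (intro mult_mono power_increasing) auto
  also have "\<dots> \<le> x ^ (4 * m) * (1 / (Y_coeff m * x ^ (4 * m)))"
    using x y_ge_monomial[of m x] Y_coeff_pos[of m] y_pos[of x]
    by (intro mult_left_mono divide_left_mono mult_pos_pos) auto
  also have "\<dots> = 1 / Y_coeff m"
    using x by simp
  finally show "x ^ m * \<bar>g' x\<bar> \<le> 1 / Y_coeff m" .
qed

definition f_star :: "real \<Rightarrow> real" where "f_star t = g (t - a_star) / g (- a_star)"
definition f_star' :: "real \<Rightarrow> real" where "f_star' t = g' (t - a_star) / g (- a_star)"

lemma f_star_has_derivative: "(f_star has_real_derivative f_star' t) (at t)"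
proof -
  have "((\<lambda>t. g (t - a_star)) has_real_derivative g' (t - a_star) * 1) (at t)"
    by (rule DERIV_chain2[OF g_has_derivative]) (auto intro!: derivative_eq_intros)
  then show ?thesis
    unfolding f_star_def[abs_def] f_star'_def using g_pos[of "- a_star"] by (auto intro!: derivative_eq_intros)
qed

lemma f_star'_has_derivative: "(f_star' has_real_derivative (t - a_star)\<^sup>2 * f_star t) (at t)"
proof -
  have "((\<lambda>t. g' (t - a_star)) has_real_derivative (t - a_star)\<^sup>2 * g (t - a_star) * 1) (at t)"
    by (rule DERIV_chain2[OF g'_has_derivative]) (auto intro!: derivative_eq_intros)
  then show ?thesis
    unfolding f_star_def f_star'_def[abs_def] using g_pos[of "- a_star"] by (auto intro!: derivative_eq_intros)
qed

lemma isCont_f_star: "isCont f_star t" and isCont_f_star': "isCont f_star' t"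
  using f_star_has_derivative f_star'_has_derivative DERIV_isCont by blast+

lemma f_star_0: "f_star 0 = 1"
  using g_pos[of "- a_star"] by (simp add: f_star_def)

lemma f_star'_0: "f_star' 0 = - a_star"
  using a_star(2) by (simp add: f_star'_def W_def)

lemma f_star_pos: "f_star t > 0"
  using g_pos by (simp add: f_star_def)

lemma rapidly_decreasing_f_star: "rapidly_decreasing f_star"
proof -
  have "rapidly_decreasing (\<lambda>t. g (t - a_star))"
    using a_star(1) g_decay
  proof (rule rapidly_decreasing_shift[where B = "g (- a_star)", OF less_imp_le])
    show "\<bar>g x\<bar> \<le> g (- a_star)" if "x \<ge> - a_star" for x
      using that g_antimono[of "- a_star" x] g_pos[of x] by simp
  qed
  from rapidly_decreasing_cmult[OF this, of "1 / g (- a_star)"] show ?thesis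
    by (simp add: f_star_def[abs_def])
qed

lemma rapidly_decreasing_f_star': "rapidly_decreasing f_star'"
proof -
  have "rapidly_decreasing (\<lambda>t. g' (t - a_star))"
    using a_star(1) g'_decay
  proof (rule rapidly_decreasing_shift[where B = "- g' (- a_star)", OF less_imp_le])
    show "\<bar>g' x\<bar> \<le> - g' (- a_star)" if "x \<ge> - a_star" for x
      using that g'_mono[of "- a_star" x] g'_neg[of x] by simp
  qed
  from rapidly_decreasing_cmult[OF this, of "1 / g (- a_star)"] show ?thesis
    by (simp add: f_star'_def[abs_def])
qed

lemma schwartz_halfline_of_real:
  fixes D :: "nat \<Rightarrow> real \<Rightarrow> real"
  assumes "\<And>t. D 0 t = f t"
    and "\<And>k t. (D k has_real_derivative D (Suc k) t) (at t)"
    and "\<And>k. rapidly_decreasing (D k)"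
  shows "schwartz_halfline (\<lambda>t. of_real (f t) :: 'a::real_normed_algebra_1)"
  unfolding schwartz_halfline_def
proof (intro exI[of _ "\<lambda>k t. of_real (D k t)"] conjI allI impI)
  fix k and t :: real
  show "((\<lambda>t. of_real (D k t) :: 'a) has_vector_derivative of_real (D (Suc k) t)) (at t within {0..})"
    by (rule has_vector_derivative_of_real[OF has_field_derivative_at_within[OF assms(2)]])
next
  fix k m
  obtain C where C: "\<And>t. t \<ge> 0 \<Longrightarrow> (1 + t) ^ m * \<bar>D k t\<bar> \<le> C"
    using assms(3) unfolding rapidly_decreasing_def by blast
  have "t ^ m * norm (of_real (D k t) :: 'a) \<le> C" if "t \<ge> 0" for t
  proof -
    have "t ^ m * \<bar>D k t\<bar> \<le> (1 + t) ^ m * \<bar>D k t\<bar>"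
      using that by (intro mult_right_mono power_mono) auto
    then show ?thesis using C[OF that] by simp
  qed
  then show "\<exists>C. \<forall>t\<ge>0. t ^ m * norm (of_real (D k t) :: 'a) \<le> C"
    by blast
qed (use assms(1) in simp)

(* Since f'' = (t - a)^2 f, every derivative of f_star is p f_star + q f_star' with
   polynomials p, q. *)
fun f_star_deriv_coeffs :: "nat \<Rightarrow> real poly \<times> real poly" where
  "f_star_deriv_coeffs 0 = (1, 0)"
| "f_star_deriv_coeffs (Suc k) =
     (pderiv (fst (f_star_deriv_coeffs k)) + snd (f_star_deriv_coeffs k) * [:a_star\<^sup>2, -2 * a_star, 1:],
      fst (f_star_deriv_coeffs k) + pderiv (snd (f_star_deriv_coeffs k)))"

definition f_star_deriv :: "nat \<Rightarrow> real \<Rightarrow> real" where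
  "f_star_deriv k t =
     poly (fst (f_star_deriv_coeffs k)) t * f_star t + poly (snd (f_star_deriv_coeffs k)) t * f_star' t"

lemma f_star_deriv_has_derivative:
  "(f_star_deriv k has_real_derivative f_star_deriv (Suc k) t) (at t)"
  unfolding f_star_deriv_def[abs_def]
  by (auto intro!: derivative_eq_intros poly_DERIV f_star_has_derivative f_star'_has_derivative
           simp: power2_eq_square algebra_simps)

lemma rapidly_decreasing_f_star_deriv: "rapidly_decreasing (f_star_deriv k)"
  unfolding f_star_deriv_def[abs_def]
  by (intro rapidly_decreasing_add rapidly_decreasing_mult_polynomially_bounded
        rapidly_decreasing_f_star rapidly_decreasing_f_star' polynomially_bounded_poly)

lemma schwartz_halfline_f_star: "schwartz_halfline (\<lambda>t. of_real (f_star t) :: 'a::real_normed_algebra_1)"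
  by (intro schwartz_halfline_of_real[of f_star_deriv] f_star_deriv_has_derivative
        rapidly_decreasing_f_star_deriv)
     (simp add: f_star_deriv_def)

lemma hderiv_f_star: "t \<ge> 0 \<Longrightarrow> hderiv f_star t = f_star' t"
  by (intro hderiv_eqI has_field_derivative_at_within[OF f_star_has_derivative, unfolded
        has_real_derivative_iff_has_vector_derivative])

section \<open>Moments of the minimiser\<close>

lemma set_integrable_shift_power_mult:
  assumes "rapidly_decreasing \<phi>" and "\<And>t. isCont \<phi> t"
  shows "set_integrable lborel {0..} (\<lambda>t. (t - c) ^ k * \<phi> t)"
proof (rule rapidly_decreasing_set_integrable)
  show "rapidly_decreasing (\<lambda>t. (t - c) ^ k * \<phi> t)"
    using assms(1) polynomially_bounded_shift_power by (rule rapidly_decreasing_mult_polynomially_bounded)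
  show "continuous_on {0..} (\<lambda>t. (t - c) ^ k * \<phi> t)"
    using assms(2) by (intro continuous_at_imp_continuous_on ballI continuous_intros) auto
qed

lemma set_integral_Ici_shift_power_by_parts:
  fixes \<phi> \<phi>' :: "real \<Rightarrow> real"
  assumes deriv: "\<And>t. (\<phi> has_real_derivative \<phi>' t) (at t)" and cont': "\<And>t. isCont \<phi>' t"
    and decay: "rapidly_decreasing \<phi>" "rapidly_decreasing \<phi>'"
  shows "real k * (LINT t:{0..}|lborel. (t - c) ^ (k - 1) * \<phi> t)
           + (LINT t:{0..}|lborel. (t - c) ^ k * \<phi>' t) = - ((- c) ^ k * \<phi> 0)"
proof -
  have cont: "isCont \<phi> t" for t
    using deriv DERIV_isCont by blast
  let ?F = "\<lambda>t. (t - c) ^ k * \<phi> t"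
  let ?F' = "\<lambda>t. real k * ((t - c) ^ (k - 1) * \<phi> t) + (t - c) ^ k * \<phi>' t"
  have int1: "set_integrable lborel {0..} (\<lambda>t. real k * ((t - c) ^ (k - 1) * \<phi> t))"
    using set_integrable_shift_power_mult[OF decay(1) cont] by simp
  have int2: "set_integrable lborel {0..} (\<lambda>t. (t - c) ^ k * \<phi>' t)"
    using set_integrable_shift_power_mult[OF decay(2) cont'] .
  have dF: "(?F has_real_derivative ?F' t) (at t)" for t
    by (auto intro!: derivative_eq_intros deriv simp: One_nat_def)
  have cF': "continuous_on {0..} ?F'"
    using cont cont' by (intro continuous_at_imp_continuous_on ballI continuous_intros) auto
  have rF: "rapidly_decreasing ?F" "rapidly_decreasing ?F'"
    by (intro rapidly_decreasing_add rapidly_decreasing_cmult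
          rapidly_decreasing_mult_polynomially_bounded[OF decay(1) polynomially_bounded_shift_power]
          rapidly_decreasing_mult_polynomially_bounded[OF decay(2) polynomially_bounded_shift_power])+
  from set_integral_Ici_derivative[OF has_field_derivative_at_within[OF dF] cF' rF]
  show ?thesis
    using set_integral_add(2)[OF int1 int2] by simp
qed

definition moment_ff :: "nat \<Rightarrow> real" where
  "moment_ff k = (LINT t:{0..}|lborel. (t - a_star) ^ k * (f_star t)\<^sup>2)"

definition moment_ff' :: "nat \<Rightarrow> real" where
  "moment_ff' k = (LINT t:{0..}|lborel. (t - a_star) ^ k * (f_star t * f_star' t))"

definition moment_f'f' :: "nat \<Rightarrow> real" where
  "moment_f'f' k = (LINT t:{0..}|lborel. (t - a_star) ^ k * (f_star' t)\<^sup>2)"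

lemma rapidly_decreasing_f_star_products:
  "rapidly_decreasing (\<lambda>t. (f_star t)\<^sup>2)"
  "rapidly_decreasing (\<lambda>t. f_star t * f_star' t)"
  "rapidly_decreasing (\<lambda>t. (f_star' t)\<^sup>2)"
  unfolding power2_eq_square
  by (intro rapidly_decreasing_mult rapidly_decreasing_f_star rapidly_decreasing_f_star')+

lemma set_integrable_f_star_products:
  "set_integrable lborel {0..} (\<lambda>t. (t - a_star) ^ k * (f_star t)\<^sup>2)"
  "set_integrable lborel {0..} (\<lambda>t. (t - a_star) ^ k * (f_star t * f_star' t))"
  "set_integrable lborel {0..} (\<lambda>t. (t - a_star) ^ k * (f_star' t)\<^sup>2)"
  by (intro set_integrable_shift_power_mult rapidly_decreasing_f_star_products continuous_intros
        isCont_f_star isCont_f_star')+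

lemma moment_identity_ff: "real k * moment_ff (k - 1) + 2 * moment_ff' k = - ((- a_star) ^ k)"
proof -
  have "real k * moment_ff (k - 1)
        + (LINT t:{0..}|lborel. (t - a_star) ^ k * (2 * (f_star t * f_star' t)))
      = - ((- a_star) ^ k * (f_star 0)\<^sup>2)"
    unfolding moment_ff_def
  proof (rule set_integral_Ici_shift_power_by_parts)
    show "((\<lambda>t. (f_star t)\<^sup>2) has_real_derivative 2 * (f_star t * f_star' t)) (at t)" for t
      by (auto intro!: derivative_eq_intros f_star_has_derivative)
    show "isCont (\<lambda>t. 2 * (f_star t * f_star' t)) t" for t
      by (intro continuous_intros isCont_f_star isCont_f_star')
    show "rapidly_decreasing (\<lambda>t. 2 * (f_star t * f_star' t))"
      by (intro rapidly_decreasing_cmult rapidly_decreasing_f_star_products)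
  qed (rule rapidly_decreasing_f_star_products)
  then show ?thesis
    by (simp add: moment_ff'_def mult.left_commute[of _ 2] f_star_0)
qed

lemma moment_identity_ff':
  "real k * moment_ff' (k - 1) + moment_f'f' k + moment_ff (k + 2) = (- a_star) ^ k * a_star"
proof -
  have "real k * moment_ff' (k - 1)
        + (LINT t:{0..}|lborel. (t - a_star) ^ k * ((f_star' t)\<^sup>2 + (t - a_star)\<^sup>2 * (f_star t)\<^sup>2))
      = - ((- a_star) ^ k * (f_star 0 * f_star' 0))"
    unfolding moment_ff'_def
  proof (rule set_integral_Ici_shift_power_by_parts)
    show "((\<lambda>t. f_star t * f_star' t) has_real_derivative
            (f_star' t)\<^sup>2 + (t - a_star)\<^sup>2 * (f_star t)\<^sup>2) (at t)" for t
      by (auto intro!: derivative_eq_intros f_star_has_derivative f_star'_has_derivative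
               simp: power2_eq_square algebra_simps)
    show "isCont (\<lambda>t. (f_star' t)\<^sup>2 + (t - a_star)\<^sup>2 * (f_star t)\<^sup>2) t" for t
      by (intro continuous_intros isCont_f_star isCont_f_star')
    show "rapidly_decreasing (\<lambda>t. (f_star' t)\<^sup>2 + (t - a_star)\<^sup>2 * (f_star t)\<^sup>2)"
      by (intro rapidly_decreasing_add rapidly_decreasing_f_star_products
            rapidly_decreasing_mult_polynomially_bounded[OF _ polynomially_bounded_shift_power])
  qed (rule rapidly_decreasing_f_star_products)
  moreover have "(\<lambda>t. (t - a_star) ^ k * ((f_star' t)\<^sup>2 + (t - a_star)\<^sup>2 * (f_star t)\<^sup>2))
      = (\<lambda>t. (t - a_star) ^ k * (f_star' t)\<^sup>2 + (t - a_star) ^ (k + 2) * (f_star t)\<^sup>2)"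
    by (simp add: fun_eq_iff distrib_left power_add power2_eq_square mult_ac)
  then have "(LINT t:{0..}|lborel. (t - a_star) ^ k * ((f_star' t)\<^sup>2 + (t - a_star)\<^sup>2 * (f_star t)\<^sup>2))
      = moment_f'f' k + moment_ff (k + 2)"
    unfolding moment_f'f'_def moment_ff_def
    using set_integral_add(2)[OF set_integrable_f_star_products(3,1), of k "k + 2"] by simp
  ultimately show ?thesis
    by (simp add: f_star_0 f_star'_0)
qed

lemma moment_identity_f'f':
  "real k * moment_f'f' (k - 1) + 2 * moment_ff' (k + 2) = - ((- a_star) ^ k * a_star\<^sup>2)"
proof -
  have "real k * moment_f'f' (k - 1)
        + (LINT t:{0..}|lborel. (t - a_star) ^ k * (2 * ((t - a_star)\<^sup>2 * (f_star t * f_star' t))))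
      = - ((- a_star) ^ k * (f_star' 0)\<^sup>2)"
    unfolding moment_f'f'_def
  proof (rule set_integral_Ici_shift_power_by_parts)
    show "((\<lambda>t. (f_star' t)\<^sup>2) has_real_derivative
            2 * ((t - a_star)\<^sup>2 * (f_star t * f_star' t))) (at t)" for t
      by (auto intro!: derivative_eq_intros f_star'_has_derivative simp: algebra_simps)
    show "isCont (\<lambda>t. 2 * ((t - a_star)\<^sup>2 * (f_star t * f_star' t))) t" for t
      by (intro continuous_intros isCont_f_star isCont_f_star')
    show "rapidly_decreasing (\<lambda>t. 2 * ((t - a_star)\<^sup>2 * (f_star t * f_star' t)))"
      by (intro rapidly_decreasing_cmult rapidly_decreasing_f_star_products
            rapidly_decreasing_mult_polynomially_bounded[OF _ polynomially_bounded_shift_power])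
  qed (rule rapidly_decreasing_f_star_products)
  moreover have "(\<lambda>t. (t - a_star) ^ k * (2 * ((t - a_star)\<^sup>2 * (f_star t * f_star' t))))
      = (\<lambda>t. 2 * ((t - a_star) ^ (k + 2) * (f_star t * f_star' t)))"
    by (simp add: fun_eq_iff power_add power2_eq_square mult_ac)
  then have "(LINT t:{0..}|lborel. (t - a_star) ^ k * (2 * ((t - a_star)\<^sup>2 * (f_star t * f_star' t))))
      = 2 * moment_ff' (k + 2)"
    by (simp add: moment_ff'_def)
  ultimately show ?thesis
    by (simp add: f_star'_0)
qed

lemma moment_values:
  shows "moment_f'f' 0 + moment_ff 2 = a_star" "moment_ff' 0 = - 1 / 2" "moment_ff 1 = 0"
    "moment_ff 2 = a_star / 4" "moment_f'f' 0 = 3 * a_star / 4"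
    "moment_ff 3 = (1 - 2 * a_star\<^sup>2) / 6" "moment_f'f' 1 = (1 - 2 * a_star\<^sup>2) / 3"
proof -
  have ff0: "2 * moment_ff' 0 = -1"
    and ff2: "2 * moment_ff 1 + 2 * moment_ff' 2 = - a_star\<^sup>2"
    and ff3: "3 * moment_ff 2 + 2 * moment_ff' 3 = a_star ^ 3"
    and ff4: "4 * moment_ff 3 + 2 * moment_ff' 4 = - (a_star ^ 4)"
    using moment_identity_ff[of 0] moment_identity_ff[of 2] moment_identity_ff[of 3]
      moment_identity_ff[of 4]
    by (simp_all add: eval_nat_numeral algebra_simps)
  have fd0: "moment_f'f' 0 + moment_ff 2 = a_star"
    and fd1: "moment_ff' 0 + moment_f'f' 1 + moment_ff 3 = - a_star\<^sup>2"
    using moment_identity_ff'[of 0] moment_identity_ff'[of 1]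
    by (simp_all add: eval_nat_numeral algebra_simps)
  have dd0: "2 * moment_ff' 2 = - a_star\<^sup>2"
    and dd1: "moment_f'f' 0 + 2 * moment_ff' 3 = a_star ^ 3"
    and dd2: "2 * moment_f'f' 1 + 2 * moment_ff' 4 = - (a_star ^ 4)"
    using moment_identity_f'f'[of 0] moment_identity_f'f'[of 1] moment_identity_f'f'[of 2]
    by (simp_all add: eval_nat_numeral algebra_simps)
  show "moment_f'f' 0 + moment_ff 2 = a_star" by (rule fd0)
  show "moment_ff' 0 = - 1 / 2" using ff0 by simp
  show "moment_ff 1 = 0" using ff2 dd0 by simp
  show "moment_ff 2 = a_star / 4" using fd0 ff3 dd1 by simp
  show "moment_f'f' 0 = 3 * a_star / 4" using fd0 ff3 dd1 by simp
  show "moment_ff 3 = (1 - 2 * a_star\<^sup>2) / 6" using fd1 dd2 ff4 ff0 by simp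
  show "moment_f'f' 1 = (1 - 2 * a_star\<^sup>2) / 3" using fd1 dd2 ff4 ff0 by simp
qed

lemma f_star_integrals:
  shows "(LINT t:{0..}|lborel. (f_star' t)\<^sup>2 + (t - a_star)\<^sup>2 * (f_star t)\<^sup>2) = a_star"
    and "(LINT t:{0..}|lborel. (t - a_star) * (f_star t)\<^sup>2) = 0"
    and "(LINT t:{0..}|lborel. (t - a_star)\<^sup>2 * (f_star t)\<^sup>2) = a_star / 4"
    and "(LINT t:{0..}|lborel. (t - a_star) ^ 3 * (f_star t)\<^sup>2) = (1 - 2 * a_star\<^sup>2) / 6"
    and "(LINT t:{0..}|lborel. f_star' t * f_star t) = - 1 / 2"
    and "(LINT t:{0..}|lborel. t * (f_star' t)\<^sup>2) = 1 / 3 + a_star\<^sup>2 / 12"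
proof -
  show "(LINT t:{0..}|lborel. (f_star' t)\<^sup>2 + (t - a_star)\<^sup>2 * (f_star t)\<^sup>2) = a_star"
    using set_integral_add(2)[OF set_integrable_f_star_products(3,1), of 0 2] moment_values(1)
    by (simp add: moment_ff_def moment_f'f'_def)
  show "(LINT t:{0..}|lborel. (t - a_star) * (f_star t)\<^sup>2) = 0"
    using moment_values(3) by (simp add: moment_ff_def)
  show "(LINT t:{0..}|lborel. (t - a_star)\<^sup>2 * (f_star t)\<^sup>2) = a_star / 4"
    using moment_values(4) by (simp add: moment_ff_def)
  show "(LINT t:{0..}|lborel. (t - a_star) ^ 3 * (f_star t)\<^sup>2) = (1 - 2 * a_star\<^sup>2) / 6"
    using moment_values(6) by (simp add: moment_ff_def)
  show "(LINT t:{0..}|lborel. f_star' t * f_star t) = - 1 / 2"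
    using moment_values(2) by (simp add: moment_ff'_def mult.commute)
  have "(LINT t:{0..}|lborel. t * (f_star' t)\<^sup>2)
      = (LINT t:{0..}|lborel. (t - a_star) ^ 1 * (f_star' t)\<^sup>2 + a_star * ((t - a_star) ^ 0 * (f_star' t)\<^sup>2))"
    by (simp add: algebra_simps)
  also have "\<dots> = (LINT t:{0..}|lborel. (t - a_star) ^ 1 * (f_star' t)\<^sup>2)
                    + (LINT t:{0..}|lborel. a_star * ((t - a_star) ^ 0 * (f_star' t)\<^sup>2))"
    by (intro set_integral_add(2) set_integrable_f_star_products)
       (rule set_integrable_mult_right, rule set_integrable_f_star_products)
  also have "\<dots> = moment_f'f' 1 + a_star * moment_f'f' 0"
    by (simp add: moment_f'f'_def)
  finally show "(LINT t:{0..}|lborel. t * (f_star' t)\<^sup>2) = 1 / 3 + a_star\<^sup>2 / 12"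
    using moment_values(5,7) by (simp add: field_simps power2_eq_square)
qed

section \<open>Identification of alpha_hat\<close>

lemma alpha_hat_eq_a_star: "alpha_hat = a_star"
  unfolding alpha_hat_def
proof (rule cInf_eq_minimum)
  let ?f = "\<lambda>t. complex_of_real (f_star t)"
  have "hderiv ?f t = complex_of_real (f_star' t)" if "t \<ge> 0" for t
    using that by (intro hderiv_eqI has_vector_derivative_of_real
        has_field_derivative_at_within[OF f_star_has_derivative])
  then have "(LINT t:{0..}|lborel. (cmod (hderiv ?f t))\<^sup>2 + (t - a_star)\<^sup>2 * (cmod (?f t))\<^sup>2)
      = (LINT t:{0..}|lborel. (f_star' t)\<^sup>2 + (t - a_star)\<^sup>2 * (f_star t)\<^sup>2)"
    by (intro set_lebesgue_integral_cong) auto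
  then show "a_star \<in> {(LINT t:{0..}|lborel. (cmod (hderiv f t))\<^sup>2 + (t - \<xi>)\<^sup>2 * (cmod (f t))\<^sup>2)
                       / (cmod (f 0))\<^sup>2 | (f :: real \<Rightarrow> complex) \<xi>. schwartz_halfline f \<and> f 0 \<noteq> 0}"
    using schwartz_halfline_f_star f_star_0 f_star_integrals(1)
    by (intro CollectI exI[of _ ?f] exI[of _ a_star]) auto
next
  fix x assume "x \<in> {(LINT t:{0..}|lborel. (cmod (hderiv f t))\<^sup>2 + (t - \<xi>)\<^sup>2 * (cmod (f t))\<^sup>2)
                       / (cmod (f 0))\<^sup>2 | (f :: real \<Rightarrow> complex) \<xi>. schwartz_halfline f \<and> f 0 \<noteq> 0}"
  then obtain f :: "real \<Rightarrow> complex" and \<xi>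
    where x: "x = (LINT t:{0..}|lborel. (cmod (hderiv f t))\<^sup>2 + (t - \<xi>)\<^sup>2 * (cmod (f t))\<^sup>2)
                  / (cmod (f 0))\<^sup>2"
      and f: "schwartz_halfline f" "f 0 \<noteq> 0"
    by blast
  have "a_star * (cmod (f 0))\<^sup>2 \<le> W (-\<xi>) * (cmod (f 0))\<^sup>2"
    using a_star(3) by (intro mult_right_mono) auto
  also have "\<dots> \<le> (LINT t:{0..}|lborel. (cmod (hderiv f t))\<^sup>2 + (t - \<xi>)\<^sup>2 * (cmod (f t))\<^sup>2)"
    using f(1) by (rule energy_ge_W)
  finally show "a_star \<le> x"
    unfolding x using f(2) by (simp add: pos_le_divide_eq)
qed

theorem proposition2p1:
  "\<exists>f :: real \<Rightarrow> real.
     schwartz_halfline f \<and>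
     (\<forall>t>0. f t > 0) \<and> f 0 = 1 \<and>
     (LINT t:{0..}|lborel. (hderiv f t)\<^sup>2 + (t - alpha_hat)\<^sup>2 * (f t)\<^sup>2) = alpha_hat \<and>
     (LINT t:{0..}|lborel. (t - alpha_hat) * (f t)\<^sup>2) = 0 \<and>
     (LINT t:{0..}|lborel. (t - alpha_hat)\<^sup>2 * (f t)\<^sup>2) = alpha_hat / 4 \<and>
     (LINT t:{0..}|lborel. (t - alpha_hat) ^ 3 * (f t)\<^sup>2) = (1 - 2 * alpha_hat\<^sup>2) / 6 \<and>
     (LINT t:{0..}|lborel. hderiv f t * f t) = - 1 / 2 \<and>
     (LINT t:{0..}|lborel. t * (hderiv f t)\<^sup>2) = 1 / 3 + alpha_hat\<^sup>2 / 12"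
proof -
  have hderiv_integral: "(LINT t:{0..}|lborel. \<Phi> t (hderiv f_star t))
      = (LINT t:{0..}|lborel. \<Phi> t (f_star' t))" for \<Phi> :: "real \<Rightarrow> real \<Rightarrow> real"
    using hderiv_f_star by (intro set_lebesgue_integral_cong) auto
  show ?thesis
    unfolding alpha_hat_eq_a_star
    using schwartz_halfline_f_star[where 'a = real] f_star_pos f_star_0 f_star_integrals
      hderiv_integral[of "\<lambda>t d. d\<^sup>2 + (t - a_star)\<^sup>2 * (f_star t)\<^sup>2"]
      hderiv_integral[of "\<lambda>t d. d * f_star t"] hderiv_integral[of "\<lambda>t d. t * d\<^sup>2"]
    by (intro exI[of _ f_star]) simp
qed

end
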